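(* Let $(X,\rho)$ be a metric space, let $c>0$, and for $x,y\in X$ define $$W(x,y):=\log\Big(1+2c\sinh\frac{\rho(x,y)}{2}\Big).$$ If $c\ge 1$, then $W$ is a metric on $X$. Moreover, if $X=\mathbb{B}^2=\{x\in\mathbb{R}^2:|x|<1\}$ is the unit disk and $\rho=j_{\mathbb{B}^2}$, then $W$ is a metric on $\mathbb{B}^2$ if and only if $c\ge 1$.
   Context: For a proper nonempty open subset $D\subset\mathbb{R}^n$, $d_D(x)=\operatorname{dist}(x,\partial D)$, and the distance ratio metric is $j_D(x,y)=\log\Big(1+\frac{|x-y|}{\min\{d_D(x),d_D(y)\}}\Big)$ for $x,y\in D$. For the unit disk, $d_{\mathbb{B}^2}(x)=1-|x|$. *)

theory Defs
  imports "HOL-Analysis.Analysis"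
begin

definition bdist :: "'a::euclidean_space set \<Rightarrow> 'a \<Rightarrow> real" where
  "bdist D x = infdist x (frontier D)"

definition j_metric :: "'a::euclidean_space set \<Rightarrow> 'a \<Rightarrow> 'a \<Rightarrow> real" where
  "j_metric D x y = ln (1 + dist x y / min (bdist D x) (bdist D y))"

definition W_fun :: "real \<Rightarrow> ('a \<Rightarrow> 'a \<Rightarrow> real) \<Rightarrow> 'a \<Rightarrow> 'a \<Rightarrow> real" where
  "W_fun c \<rho> x y = ln (1 + 2 * c * sinh (\<rho> x y / 2))"

end

theory Submission
  imports Defs
begin

text \<open>
  Writing \<open>W = ln f\<close>, the triangle inequality for \<open>W\<close> is the submultiplicativity
  \<open>f(x,z) \<le> f(x,y) f(y,z)\<close>. For \<open>f = 1 + 2c sinh(\<rho>/2)\<close> the addition theorem for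
  \<open>sinh\<close> together with \<open>cosh s - 1 \<le> sinh s\<close> reduces this to \<open>1 \<le> c\<close>; the same
  scheme shows that \<open>j\<close> itself is a metric. Along a radius of the disk, \<open>j\<close> is additive,
  so for \<open>c < 1\<close> three points at \<open>j\<close>-distances \<open>2t, 2t, 4t\<close> violate the triangle
  inequality for \<open>W\<close> as soon as \<open>cosh t - c sinh t > 1\<close>, which holds for large \<open>t\<close>.
\<close>

lemma cosh_minus_one_le_sinh:
  fixes t :: real
  assumes "0 \<le> t"
  shows "cosh t - 1 \<le> sinh t"
proof -
  have "exp (- t) \<le> 1"
    using assms by simp
  then show ?thesis
    using cosh_minus_sinh[of t] by linarith
qed

lemma one_plus_sinh_add_le:
  fixes c s t :: real
  assumes "1 \<le> c" "0 \<le> s" "0 \<le> t"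
  shows "1 + 2 * c * sinh (s + t) \<le> (1 + 2 * c * sinh s) * (1 + 2 * c * sinh t)"
proof -
  have "sinh s * (cosh t - 1) + sinh t * (cosh s - 1) \<le> 2 * (sinh s * sinh t)"
    using assms mult_left_mono[OF cosh_minus_one_le_sinh[of t], of "sinh s"]
      mult_left_mono[OF cosh_minus_one_le_sinh[of s], of "sinh t"] by (simp add: mult.commute)
  also have "\<dots> \<le> 2 * c * (sinh s * sinh t)"
    using assms by (intro mult_right_mono) auto
  finally have "2 * c * (sinh s * (cosh t - 1) + sinh t * (cosh s - 1)) \<le> 2 * c * (2 * c * (sinh s * sinh t))"
    using assms by (intro mult_left_mono) auto
  then show ?thesis by (simp add: sinh_add algebra_simps)
qed

lemma one_plus_sinh_double_gt:
  fixes c t :: real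
  assumes "0 < c" "c < 1" "t = ln (2 / (1 - c))"
  shows "(1 + 2 * c * sinh t)\<^sup>2 < 1 + 2 * c * sinh (2 * t)"
proof -
  have exp_t: "exp t = 2 / (1 - c)" and "0 < t"
    using assms by (simp_all add: ln_gt_zero_iff)
  have "cosh t - c * sinh t = ((1 - c) * exp t + (1 + c) * exp (- t)) / 2"
    by (simp add: cosh_def sinh_def field_simps)
  also have "\<dots> > 1"
  proof -
    have "(1 - c) * exp t = 2"
      using assms(2) by (simp add: exp_t field_simps)
    moreover have "0 < (1 + c) * exp (- t)"
      using assms(1) by simp
    ultimately show ?thesis
      by simp
  qed
  finally have "4 * c * sinh t * (1 + c * sinh t) < 4 * c * sinh t * cosh t"
    using assms \<open>0 < t\<close> by (intro mult_strict_left_mono) auto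
  then show ?thesis
    unfolding sinh_double by (simp add: power2_eq_square algebra_simps)
qed

lemma Metric_space_ln_submultiplicative:
  fixes f :: "'a \<Rightarrow> 'a \<Rightarrow> real"
  assumes ge1: "\<And>x y. 1 \<le> f x y"
    and sym: "\<And>x y. f x y = f y x"
    and eq1: "\<And>x y. \<lbrakk>x \<in> X; y \<in> X\<rbrakk> \<Longrightarrow> f x y = 1 \<longleftrightarrow> x = y"
    and submult: "\<And>x y z. \<lbrakk>x \<in> X; y \<in> X; z \<in> X\<rbrakk> \<Longrightarrow> f x z \<le> f x y * f y z"
  shows "Metric_space X (\<lambda>x y. ln (f x y))"
proof
  fix x y z
  show "0 \<le> ln (f x y)" "ln (f x y) = ln (f y x)"
    using ge1[of x y] sym[of x y] by simp_all
  show "ln (f x y) = 0 \<longleftrightarrow> x = y" if "x \<in> X" "y \<in> X"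
    using eq1[OF that] ge1[of x y] by simp
  assume "x \<in> X" "y \<in> X" "z \<in> X"
  then have "ln (f x z) \<le> ln (f x y * f y z)"
    using submult ge1[of x z] by (intro ln_mono) auto
  also have "\<dots> = ln (f x y) + ln (f y z)"
    using ge1[of x y] ge1[of y z] by (simp add: ln_mult)
  finally show "ln (f x z) \<le> ln (f x y) + ln (f y z)" .
qed

lemma Metric_space_W_fun:
  assumes "Metric_space X \<rho>" "1 \<le> c"
  shows "Metric_space X (W_fun c \<rho>)"
proof -
  interpret Metric_space X \<rho> by fact
  have "Metric_space X (\<lambda>x y. ln (1 + 2 * c * sinh (\<rho> x y / 2)))"
  proof (rule Metric_space_ln_submultiplicative)
    fix x y z
    show "1 \<le> 1 + 2 * c * sinh (\<rho> x y / 2)"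
      using \<open>1 \<le> c\<close> by simp
    show "1 + 2 * c * sinh (\<rho> x y / 2) = 1 + 2 * c * sinh (\<rho> y x / 2)"
      by (simp add: commute)
    show "1 + 2 * c * sinh (\<rho> x y / 2) = 1 \<longleftrightarrow> x = y" if "x \<in> X" "y \<in> X"
      using \<open>1 \<le> c\<close> that by simp
    assume "x \<in> X" "y \<in> X" "z \<in> X"
    then have "1 + 2 * c * sinh (\<rho> x z / 2) \<le> 1 + 2 * c * sinh (\<rho> x y / 2 + \<rho> y z / 2)"
      using \<open>1 \<le> c\<close> triangle[of x y z] by simp
    also have "\<dots> \<le> (1 + 2 * c * sinh (\<rho> x y / 2)) * (1 + 2 * c * sinh (\<rho> y z / 2))"
      using \<open>1 \<le> c\<close> by (intro one_plus_sinh_add_le) auto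
    finally show "1 + 2 * c * sinh (\<rho> x z / 2)
        \<le> (1 + 2 * c * sinh (\<rho> x y / 2)) * (1 + 2 * c * sinh (\<rho> y z / 2))" .
  qed
  then show ?thesis
    by (simp add: W_fun_def [abs_def])
qed

lemma bdist_pos:
  assumes "open D" "D \<noteq> UNIV" "x \<in> D"
  shows "0 < bdist D x"
proof -
  have "frontier D \<noteq> {}"
    using assms by (intro frontier_not_empty) auto
  moreover have "x \<notin> frontier D"
    using assms by (simp add: frontier_def interior_open)
  ultimately show ?thesis
    unfolding bdist_def by (intro infdist_pos_not_in_closed) auto
qed

lemma one_plus_div_min_le_mult:
  fixes dx dy dz a b e :: real
  assumes "0 < dx" "0 < dy" "0 < dz" "\<bar>dx - dy\<bar> \<le> a" "\<bar>dy - dz\<bar> \<le> b" "0 \<le> e" "e \<le> a + b"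
  shows "1 + e / min dx dz \<le> (1 + a / min dx dy) * (1 + b / min dy dz)"
proof -
  have ordered: "1 + (a + b) / dx \<le> (1 + a / min dx dy) * (1 + b / min dy dz)"
    if "dx \<le> dz" "0 < dx" "0 < dy" "0 < dz" "\<bar>dx - dy\<bar> \<le> a" "\<bar>dy - dz\<bar> \<le> b"
    for dx dy dz a b :: real
  proof (cases "dx \<le> dy")
    case True
    have "0 \<le> b" "min dy dz \<le> dx + a"
      using that by linarith+
    then have "b * min dy dz \<le> b * (dx + a)"
      by (intro mult_left_mono)
    then have "b * min dy dz / (dx * min dy dz) \<le> b * (dx + a) / (dx * min dy dz)"
      using that by (intro divide_right_mono) auto
    then have "b / dx \<le> b * (dx + a) / (dx * min dy dz)"
      using that by simp
    moreover have "(1 + a / dx) * (1 + b / min dy dz) = 1 + a / dx + b * (dx + a) / (dx * min dy dz)"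
      using that by (simp add: field_simps)
    ultimately show ?thesis
      using True by (simp add: add_divide_distrib)
  next
    case False
    have "0 \<le> a" "0 \<le> b"
      using that by linarith+
    have "1 + (a + b) / dx \<le> 1 + (a + b) / dy"
      using False that \<open>0 \<le> a\<close> \<open>0 \<le> b\<close> by (auto intro: divide_left_mono)
    also have "\<dots> \<le> 1 + (a + b) / dy + a / dy * (b / dy)"
      using that \<open>0 \<le> a\<close> \<open>0 \<le> b\<close> by simp
    also have "\<dots> = (1 + a / dy) * (1 + b / dy)"
      by (simp add: algebra_simps add_divide_distrib)
    finally show ?thesis
      using False that by (simp add: min_def)
  qed
  have "1 + e / min dx dz \<le> 1 + (a + b) / min dx dz"
    using assms by (simp add: divide_right_mono)
  also have "\<dots> \<le> (1 + a / min dx dy) * (1 + b / min dy dz)"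
  proof (cases "dx \<le> dz")
    case True
    then show ?thesis
      using ordered[of dx dz dy a b] assms by simp
  next
    case False
    then show ?thesis
      using ordered[of dz dx dy b a] assms
      by (simp add: abs_minus_commute min.commute mult.commute add.commute)
  qed
  finally show ?thesis .
qed

lemma Metric_space_j_metric:
  fixes D :: "'a::euclidean_space set"
  assumes "open D" "D \<noteq> UNIV"
  shows "Metric_space D (j_metric D)"
proof -
  have "Metric_space D (\<lambda>x y. ln (1 + dist x y / min (bdist D x) (bdist D y)))"
  proof (rule Metric_space_ln_submultiplicative)
    fix x y z
    show "1 \<le> 1 + dist x y / min (bdist D x) (bdist D y)"
      by (simp add: bdist_def infdist_nonneg)
    show "1 + dist x y / min (bdist D x) (bdist D y) = 1 + dist y x / min (bdist D y) (bdist D x)"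
      by (simp add: dist_commute min.commute)
    show "1 + dist x y / min (bdist D x) (bdist D y) = 1 \<longleftrightarrow> x = y" if "x \<in> D" "y \<in> D"
      using bdist_pos[OF assms that(1)] bdist_pos[OF assms that(2)] by (simp add: min_def)
    assume "x \<in> D" "y \<in> D" "z \<in> D"
    then show "1 + dist x z / min (bdist D x) (bdist D z)
        \<le> (1 + dist x y / min (bdist D x) (bdist D y)) * (1 + dist y z / min (bdist D y) (bdist D z))"
      using bdist_pos[OF assms] dist_triangle[of x z y]
      by (intro one_plus_div_min_le_mult) (auto simp: bdist_def infdist_triangle_abs)
  qed
  then show ?thesis
    by (simp add: j_metric_def [abs_def])
qed

lemma bdist_unit_ball_radial:
  fixes e :: "'a::euclidean_space"
  assumes "norm e = 1" "0 \<le> t" "t < 1"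
  shows "bdist (ball 0 1) (t *\<^sub>R e) = 1 - t"
proof -
  have sphere_nonempty: "sphere (0::'a) 1 \<noteq> {}"
    by simp
  have "infdist (t *\<^sub>R e) (sphere 0 1) \<le> dist (t *\<^sub>R e) e"
    using assms by (intro infdist_le) auto
  also have "\<dots> = norm ((1 - t) *\<^sub>R e)"
    by (simp add: dist_norm algebra_simps norm_minus_commute)
  also have "\<dots> = 1 - t"
    using assms by simp
  finally have "infdist (t *\<^sub>R e) (sphere 0 1) \<le> 1 - t" .
  moreover have "1 - t \<le> infdist (t *\<^sub>R e) (sphere 0 1)"
    unfolding infdist_notempty[OF sphere_nonempty]
  proof (rule cINF_greatest[OF sphere_nonempty])
    fix s :: 'a
    assume "s \<in> sphere 0 1"
    then show "1 - t \<le> dist (t *\<^sub>R e) s"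
      using norm_triangle_ineq2[of s "t *\<^sub>R e"] assms by (simp add: dist_norm norm_minus_commute)
  qed
  ultimately show ?thesis
    by (simp add: bdist_def)
qed

lemma j_metric_unit_ball_radial:
  fixes e :: "'a::euclidean_space"
  assumes "norm e = 1" "0 \<le> a" "a \<le> b"
  shows "j_metric (ball 0 1) ((1 - exp (- a)) *\<^sub>R e) ((1 - exp (- b)) *\<^sub>R e) = b - a"
proof -
  have bdist: "bdist (ball 0 1) ((1 - exp (- r)) *\<^sub>R e) = exp (- r)" if "0 \<le> r" for r
    using assms that by (subst bdist_unit_ball_radial) auto
  have "dist ((1 - exp (- a)) *\<^sub>R e) ((1 - exp (- b)) *\<^sub>R e) = norm ((exp (- b) - exp (- a)) *\<^sub>R e)"
    by (simp add: dist_norm algebra_simps)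
  also have "\<dots> = exp (- a) - exp (- b)"
    using assms by simp
  finally have "j_metric (ball 0 1) ((1 - exp (- a)) *\<^sub>R e) ((1 - exp (- b)) *\<^sub>R e)
      = ln (1 + (exp (- a) - exp (- b)) / exp (- b))"
    using assms by (simp add: j_metric_def bdist min_def)
  also have "\<dots> = ln (exp (b - a))"
    by (simp add: field_simps exp_diff exp_minus)
  finally show ?thesis
    by simp
qed

lemma not_Metric_space_W_fun_j_metric_unit_ball:
  fixes c :: real
  assumes "0 < c" "c < 1"
  shows "\<not> Metric_space (ball (0::'a::euclidean_space) 1) (W_fun c (j_metric (ball 0 1)))"
proof
  assume "Metric_space (ball (0::'a) 1) (W_fun c (j_metric (ball 0 1)))"
  then interpret W: Metric_space "ball (0::'a) 1" "W_fun c (j_metric (ball 0 1))" .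
  obtain e :: 'a where "e \<in> Basis"
    using nonempty_Basis by blast
  define p where "p r = (1 - exp (- r)) *\<^sub>R e" for r
  define t where "t = ln (2 / (1 - c))"
  have "0 < t"
    using assms by (simp add: t_def ln_gt_zero_iff)
  have "norm e = 1"
    using \<open>e \<in> Basis\<close> by simp
  then have in_ball: "p r \<in> ball 0 1" if "0 \<le> r" for r
    using that by (simp add: p_def)
  have W_p: "W_fun c (j_metric (ball 0 1)) (p r) (p r') = ln (1 + 2 * c * sinh ((r' - r) / 2))"
    if "0 \<le> r" "r \<le> r'" for r r'
    using that \<open>norm e = 1\<close> by (simp add: W_fun_def p_def j_metric_unit_ball_radial)
  have pos: "0 < 1 + 2 * c * sinh t"
    using assms \<open>0 < t\<close> by (simp add: add_pos_pos)
  have "ln (1 + 2 * c * sinh (2 * t)) \<le> ln (1 + 2 * c * sinh t) + ln (1 + 2 * c * sinh t)"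
    using W.triangle[OF in_ball in_ball in_ball, of 0 "2 * t" "4 * t"] \<open>0 < t\<close> by (simp add: W_p)
  also have "\<dots> = ln ((1 + 2 * c * sinh t)\<^sup>2)"
    using pos by (simp add: ln_mult power2_eq_square)
  also have "\<dots> < ln (1 + 2 * c * sinh (2 * t))"
    using one_plus_sinh_double_gt[OF assms t_def] pos
    by (subst ln_less_cancel_iff) (auto intro: order.strict_trans[OF zero_less_power])
  finally show False
    by simp
qed

theorem theorem1p1:
  fixes c :: real and X :: "'a set" and \<rho> :: "'a \<Rightarrow> 'a \<Rightarrow> real"
  assumes "c > 0"
  shows "(Metric_space X \<rho> \<and> c \<ge> 1 \<longrightarrow> Metric_space X (W_fun c \<rho>))
       \<and> (Metric_space (ball (0::real^2) 1) (W_fun c (j_metric (ball (0::real^2) 1))) \<longleftrightarrow> c \<ge> 1)"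
proof -
  have "ball (0::real^2) 1 \<noteq> UNIV"
    using bounded_ball not_bounded_UNIV by metis
  then have "Metric_space (ball (0::real^2) 1) (j_metric (ball 0 1))"
    by (intro Metric_space_j_metric) auto
  then show ?thesis
    using Metric_space_W_fun not_Metric_space_W_fun_j_metric_unit_ball[OF assms]
    by (metis not_le)
qed

end
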